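(* Let $p \geqslant 7$ be a prime and let $V$ be a $1$-dimensional vector space over $\mathbb{F}_p$. Let $G = \mathrm{Sym}(V)$, let $H = \mathrm{AGL}(V)$, and let $T$ be the group of diagonal matrices in $\mathrm{GL}(V)$ (here $T = \mathrm{GL}(V)$). Then there exists $x \in G$ such that $H \cap H^x = T$.
   Context: $\mathrm{AGL}(V)$ is the group of invertible affine transformations $\mathbf{v} \mapsto \mathbf{v}g + \mathbf{u}$ ($g \in \mathrm{GL}(V)$, $\mathbf{u} \in V$) of $V$, regarded as a subgroup of $\mathrm{Sym}(V)$. *)

theory Defs
  imports "HOL-Computational_Algebra.Primes"
begin

text \<open>V is a 1-dimensional vector space over F_p; we identify V with the field F_p itself,
  modelled as a finite field type of prime cardinality p.
  Sym(V): all bijections V -> V.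
  T: diagonal matrices in GL(V) = GL(V) = nonzero scalar multiplications.\<close>

definition Sym_V :: "('a \<Rightarrow> 'a) set" where
  "Sym_V = {f. bij f}"

definition AGL_V :: "('a::field \<Rightarrow> 'a) set" where
  "AGL_V = {f. \<exists>g u. g \<noteq> 0 \<and> f = (\<lambda>v. v * g + u)}"

definition GL_V :: "('a::field \<Rightarrow> 'a) set" where
  "GL_V = {f. \<exists>g. g \<noteq> 0 \<and> f = (\<lambda>v. v * g)}"

text \<open>Conjugate H^x = x^{-1} H x with right actions: v^(x^{-1} h x) = x (h (x^{-1} v)).\<close>
definition conj_set :: "('a \<Rightarrow> 'a) set \<Rightarrow> ('a \<Rightarrow> 'a) \<Rightarrow> ('a \<Rightarrow> 'a) set" where
  "conj_set H x = (\<lambda>h. x \<circ> h \<circ> inv x) ` H"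

end

theory Submission
  imports Defs "HOL-Number_Theory.Residues"
begin

text \<open>Take for \<open>x\<close> the inversion \<open>v \<mapsto> v\<inverse>\<close> (with \<open>0 \<mapsto> 0\<close>). Scalings commute with it, so
  \<open>T\<close> lies in \<open>H \<inter> H\<^sup>x\<close>. Conversely, if \<open>v \<mapsto> 1 / (a / v + b)\<close> with \<open>b \<noteq> 0\<close> were affine,
  say \<open>v \<mapsto> v c + d\<close>, then evaluating at \<open>0\<close>, \<open>-a/b\<close> and \<open>a/b\<close> gives \<open>d = 1/b\<close>, \<open>a c = 1\<close>
  and \<open>a c + 1 = 1/2\<close>, hence \<open>2 = 1/2\<close>, i.e. \<open>3 = 0\<close>; this is impossible once the
  characteristic is neither 2 nor 3.\<close>

lemma inv_inverse_eq: "Hilbert_Choice.inv (inverse :: 'a::field \<Rightarrow> 'a) = inverse"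
  by (rule inv_equality) auto

lemma bij_inverse: "bij (inverse :: 'a::field \<Rightarrow> 'a)"
  by (rule o_bij[of inverse]) auto

lemma of_nat_eq_0_iff_card_dvd:
  assumes "prime (card (UNIV :: 'a::{finite,field} set))"
  shows "(of_nat n :: 'a) = 0 \<longleftrightarrow> card (UNIV :: 'a set) dvd n"
proof -
  have "CHAR('a) dvd card (UNIV :: 'a set)"
    by (rule CHAR_dvd_CARD)
  then have "CHAR('a) = card (UNIV :: 'a set)"
    using assms CHAR_not_1' by (metis One_nat_def prime_nat_iff)
  then show ?thesis
    by (simp add: of_nat_eq_0_iff_char_dvd)
qed

lemma mult_right_in_GL_V: "g \<noteq> 0 \<Longrightarrow> (\<lambda>v. v * g) \<in> GL_V"
  unfolding GL_V_def by blast

lemma GL_V_subset_AGL_V: "GL_V \<subseteq> AGL_V"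
proof
  fix f :: "'a \<Rightarrow> 'a"
  assume "f \<in> GL_V"
  then obtain g where "g \<noteq> 0" "f = (\<lambda>v. v * g + 0)"
    unfolding GL_V_def by auto
  then show "f \<in> AGL_V"
    unfolding AGL_V_def by blast
qed

lemma conj_set_inverse: "conj_set H (inverse :: 'a::field \<Rightarrow> 'a) = (\<lambda>h. inverse \<circ> h \<circ> inverse) ` H"
  by (simp add: conj_set_def inv_inverse_eq)

lemma GL_V_subset_conj_set_inverse: "GL_V \<subseteq> conj_set AGL_V inverse"
proof
  fix f :: "'a \<Rightarrow> 'a"
  assume "f \<in> GL_V"
  then obtain g where g: "g \<noteq> 0" "f = (\<lambda>v. v * g)"
    unfolding GL_V_def by auto
  then have "f = inverse \<circ> (\<lambda>v. v * inverse g) \<circ> inverse"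
    by (auto simp: fun_eq_iff field_simps)
  moreover have "(\<lambda>v. v * inverse g) \<in> AGL_V"
    using g mult_right_in_GL_V[of "inverse g"] GL_V_subset_AGL_V by auto
  ultimately show "f \<in> conj_set AGL_V inverse"
    unfolding conj_set_inverse by blast
qed

lemma inverse_conj_affine_affine_imp_translation_zero:
  fixes a b c d :: "'a::field"
  assumes "(2::'a) \<noteq> 0" and "(3::'a) \<noteq> 0" and "a \<noteq> 0"
    and affine: "\<And>v. v * c + d = inverse (inverse v * a + b)"
  shows "b = 0"
proof (rule ccontr)
  assume "b \<noteq> 0"
  have d: "d = inverse b"
    using affine[of 0] by simp
  have "(- a / b) * c + d = 0"
    using affine[of "- a / b"] \<open>a \<noteq> 0\<close> \<open>b \<noteq> 0\<close> by (simp add: field_simps)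
  then have ac: "a * c = 1"
    using d \<open>b \<noteq> 0\<close> by (simp add: field_simps)
  have "(a / b) * c + d = inverse (2 * b)"
    using affine[of "a / b"] \<open>a \<noteq> 0\<close> \<open>b \<noteq> 0\<close> by (simp add: field_simps)
  moreover have "(a / b) * c = inverse b"
    using ac by (simp add: field_simps)
  ultimately have half: "inverse b + inverse b = inverse (2 * b)"
    using d by metis
  have "4 = 2 * b * (inverse b + inverse b)"
    using \<open>b \<noteq> 0\<close> by (simp add: algebra_simps)
  also have "\<dots> = 1"
    using half \<open>b \<noteq> 0\<close> \<open>(2::'a) \<noteq> 0\<close> by simp
  finally have four: "(4::'a) = 1" .
  have "(3::'a) = 4 - 1"
    by simp
  also have "\<dots> = 0"
    using four by simp
  finally show False
    using \<open>(3::'a) \<noteq> 0\<close> by contradiction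
qed

lemma AGL_V_conj_set_inverse_imp_GL_V:
  assumes "(2::'a::field) \<noteq> 0" and "(3::'a) \<noteq> 0"
    and "f \<in> AGL_V" and "f \<in> conj_set AGL_V (inverse :: 'a \<Rightarrow> 'a)"
  shows "f \<in> GL_V"
proof -
  obtain c d where f_affine: "f = (\<lambda>v. v * c + d)"
    using \<open>f \<in> AGL_V\<close> unfolding AGL_V_def by auto
  obtain a b where "a \<noteq> 0" and f_conj: "f = inverse \<circ> (\<lambda>v. v * a + b) \<circ> inverse"
    using \<open>f \<in> conj_set AGL_V inverse\<close> unfolding conj_set_inverse AGL_V_def by auto
  have "\<And>v. v * c + d = inverse (inverse v * a + b)"
    using f_affine f_conj by (metis comp_apply)
  with assms(1,2) \<open>a \<noteq> 0\<close> have "b = 0"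
    by (rule inverse_conj_affine_affine_imp_translation_zero)
  then have "f = (\<lambda>v. v * inverse a)"
    using f_conj by (auto simp: fun_eq_iff field_simps)
  then show "f \<in> GL_V"
    using \<open>a \<noteq> 0\<close> mult_right_in_GL_V[of "inverse a"] by simp
qed

lemma AGL_V_Int_conj_set_inverse:
  assumes "(2::'a::field) \<noteq> 0" and "(3::'a) \<noteq> 0"
  shows "AGL_V \<inter> conj_set AGL_V inverse = (GL_V :: ('a \<Rightarrow> 'a) set)"
  using GL_V_subset_AGL_V GL_V_subset_conj_set_inverse AGL_V_conj_set_inverse_imp_GL_V[OF assms]
  by blast

theorem lemma3p2:
  fixes p :: nat
  assumes "prime p" and "p \<ge> 7" and "card (UNIV :: ('a::{finite,field}) set) = p"
  shows "\<exists>x \<in> (Sym_V :: ('a \<Rightarrow> 'a) set). AGL_V \<inter> conj_set AGL_V x = GL_V"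
proof -
  have "(of_nat n :: 'a) \<noteq> 0" if "0 < n" "n < p" for n
    using of_nat_eq_0_iff_card_dvd[where 'a = 'a] assms that by (auto dest: dvd_imp_le)
  from this[of 2] this[of 3] have "(2::'a) \<noteq> 0" "(3::'a) \<noteq> 0"
    using assms(2) by simp_all
  then have "AGL_V \<inter> conj_set AGL_V inverse = (GL_V :: ('a \<Rightarrow> 'a) set)"
    by (rule AGL_V_Int_conj_set_inverse)
  moreover have "inverse \<in> (Sym_V :: ('a \<Rightarrow> 'a) set)"
    unfolding Sym_V_def using bij_inverse by simp
  ultimately show ?thesis
    by blast
qed

end
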